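(* Let $k\geq2$ be an integer, let $\mathcal{S}$ be a ring, and let $P$ be a property of sequences over $\mathcal{S}$ (i.e., for each sequence over $\mathcal{S}$, $P$ is either true or false). Extend $P$ to sequences of matrices over $\mathcal{S}$ in one of the following two ways: $P$ holds for a sequence of matrices iff $P$ holds for (1) all, or (2) at least one, of the scalar sequences obtained by fixing an entry (fixed row and column). If $P$ is recursively solvable for $k$-regular sequences over $\mathcal{S}$, then $P$ (so extended) is recursively solvable for matrix-valued linear representation sequences of sets of $k$ square matrices over $\mathcal{S}$, all of the same dimension.
   Context: For $n\in\mathbb{N}_0$ let $(n)_k=n_{s-1}\cdots n_0$ be the standard base-$k$ representation of $n$ (no leading zeros; $(0)_k$ empty). A sequence $(f(n))_{n\geq0}$ over $\mathcal{S}$ is $k$-regular if there exist $r\geq0$, a $1\times r$ row vector $v$, an $r\times1$ column vector $w$ and $r\times r$ matrices $M_0,\dots,M_{k-1}$ with entries in $\mathcal{S}$ such that $f(n)=vM_{n_0}\cdots M_{n_{s-1}}w$ for all $n$; such a sequence is given to an algorithm via such a representation. Given square matrices $F_0,\dots,F_{k-1}$ over $\mathcal{S}$ of the same dimension, their matrix-valued linear representation sequence is $(F(n))_{n\geq0}$ with $F(n)=F_{n_0}\cdots F_{n_{s-1}}$ for $(n)_k=n_{s-1}\cdots n_0$; it is given to an algorithm via the matrices $F_0,\dots,F_{k-1}$. *)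

theory Defs
  imports "HOL-Library.Nat_Bijection" "Jordan_Normal_Form.Matrix"
begin

datatype recf = Zero | Succ | Proj nat | Comp recf "recf list" | Pr recf recf | Mn recf

inductive eval_recf :: "recf \<Rightarrow> nat list \<Rightarrow> nat \<Rightarrow> bool" where
  eval_Zero: "eval_recf Zero xs 0"
| eval_Succ: "eval_recf Succ (x # xs) (Suc x)"
| eval_Proj: "i < length xs \<Longrightarrow> eval_recf (Proj i) xs (xs ! i)"
| eval_Comp: "list_all2 (\<lambda>g y. eval_recf g xs y) gs ys \<Longrightarrow> eval_recf f ys z
              \<Longrightarrow> eval_recf (Comp f gs) xs z"
| eval_Pr0: "eval_recf f xs z \<Longrightarrow> eval_recf (Pr f g) (0 # xs) z"
| eval_PrS: "eval_recf (Pr f g) (n # xs) y \<Longrightarrow> eval_recf g (y # n # xs) z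
              \<Longrightarrow> eval_recf (Pr f g) (Suc n # xs) z"
| eval_Mn: "eval_recf f (n # xs) 0 \<Longrightarrow> (\<forall>m<n. \<exists>y. eval_recf f (m # xs) y \<and> y \<noteq> 0)
              \<Longrightarrow> eval_recf (Mn f) xs n"

definition recursively_solvable ::
  "('b \<Rightarrow> nat) \<Rightarrow> ('b \<Rightarrow> bool) \<Rightarrow> ('b \<Rightarrow> bool) \<Rightarrow> bool" where
  "recursively_solvable code valid Q \<longleftrightarrow>
     (\<exists>f. \<forall>x. valid x \<longrightarrow> eval_recf f [code x] (if Q x then 1 else 0))"

definition mat_code :: "('a \<Rightarrow> nat) \<Rightarrow> 'a mat \<Rightarrow> nat" where
  "mat_code enc A = list_encode [dim_row A, dim_col A,
     list_encode [enc (A $$ (i, j)). i \<leftarrow> [0..<dim_row A], j \<leftarrow> [0..<dim_col A]]]"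

definition linrep_code :: "('a \<Rightarrow> nat) \<Rightarrow> 'a mat \<times> 'a mat list \<times> 'a mat \<Rightarrow> nat" where
  "linrep_code enc x = (case x of (v, Ms, w) \<Rightarrow>
     list_encode [mat_code enc v, list_encode (map (mat_code enc) Ms), mat_code enc w])"

definition matlist_code :: "('a \<Rightarrow> nat) \<Rightarrow> 'a mat list \<Rightarrow> nat" where
  "matlist_code enc Fs = list_encode (map (mat_code enc) Fs)"

function base_digits :: "nat \<Rightarrow> nat \<Rightarrow> nat list" where
  "base_digits k n = (if n = 0 \<or> k < 2 then [] else n mod k # base_digits k (n div k))"
  by auto
termination by (relation "measure snd") auto

definition mat_prod_list :: "nat \<Rightarrow> 'a::semiring_1 mat list \<Rightarrow> 'a mat" where
  "mat_prod_list d Ms = foldr (*) Ms (1\<^sub>m d)"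

definition valid_linrep :: "nat \<Rightarrow> 'a mat \<times> 'a mat list \<times> 'a mat \<Rightarrow> bool" where
  "valid_linrep k x = (case x of (v, Ms, w) \<Rightarrow>
     v \<in> carrier_mat 1 (dim_col v) \<and> w \<in> carrier_mat (dim_col v) 1 \<and>
     length Ms = k \<and> (\<forall>M \<in> set Ms. M \<in> carrier_mat (dim_col v) (dim_col v)))"

definition linrep_seq :: "nat \<Rightarrow> 'a::semiring_1 mat \<times> 'a mat list \<times> 'a mat \<Rightarrow> nat \<Rightarrow> 'a" where
  "linrep_seq k x n = (case x of (v, Ms, w) \<Rightarrow>
     (v * mat_prod_list (dim_col v) (map (\<lambda>d. Ms ! d) (base_digits k n)) * w) $$ (0, 0))"

definition valid_matrep :: "nat \<Rightarrow> 'a mat list \<Rightarrow> bool" where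
  "valid_matrep k Fs \<longleftrightarrow> length Fs = k \<and>
     (\<forall>F \<in> set Fs. F \<in> carrier_mat (dim_row (Fs ! 0)) (dim_row (Fs ! 0)))"

definition matrep_dim :: "'a mat list \<Rightarrow> nat" where
  "matrep_dim Fs = dim_row (Fs ! 0)"

definition matrep_seq :: "nat \<Rightarrow> 'a::semiring_1 mat list \<Rightarrow> nat \<Rightarrow> 'a mat" where
  "matrep_seq k Fs n = mat_prod_list (matrep_dim Fs) (map (\<lambda>d. Fs ! d) (base_digits k n))"

definition P_all_entries :: "((nat \<Rightarrow> 'a) \<Rightarrow> bool) \<Rightarrow> nat \<Rightarrow> (nat \<Rightarrow> 'a mat) \<Rightarrow> bool" where
  "P_all_entries P d F \<longleftrightarrow> (\<forall>i<d. \<forall>j<d. P (\<lambda>n. F n $$ (i, j)))"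

definition P_some_entry :: "((nat \<Rightarrow> 'a) \<Rightarrow> bool) \<Rightarrow> nat \<Rightarrow> (nat \<Rightarrow> 'a mat) \<Rightarrow> bool" where
  "P_some_entry P d F \<longleftrightarrow> (\<exists>i<d. \<exists>j<d. P (\<lambda>n. F n $$ (i, j)))"

end

theory Submission imports Defs begin

text \<open>Entry \<open>(i, j)\<close> of \<open>F(n)\<close> is the regular sequence with linear representation
  \<open>(e\<^sub>i\<^sup>T, F\<^sub>0, \<dots>, F\<^sub>k\<^sub>-\<^sub>1, e\<^sub>j)\<close>. So a decider for the extended property reads the
  dimension \<open>d\<close> off the input, builds the codes of these \<open>d\<^sup>2\<close> representations, runs the given
  decider on each of them and multiplies the \<open>0/1\<close> answers (all entries), or negates the
  answers, multiplies and negates the result (some entry). Everything except the decoding of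
  pairs, which needs one unbounded search, is primitive recursive.\<close>

definition computes :: "nat \<Rightarrow> recf \<Rightarrow> (nat list \<Rightarrow> nat) \<Rightarrow> bool" where
  "computes n F h \<longleftrightarrow> (\<forall>xs. length xs = n \<longrightarrow> eval_recf F xs (h xs))"

lemma computesD: "computes n F h \<Longrightarrow> length xs = n \<Longrightarrow> y = h xs \<Longrightarrow> eval_recf F xs y"
  unfolding computes_def by blast

named_theorems computesI

lemma computes_Zero [computesI]: "computes n Zero (\<lambda>_. 0)"
  unfolding computes_def by (auto intro: eval_Zero)

lemma computes_Succ [computesI]: "computes 1 Succ (\<lambda>xs. Suc (xs ! 0))"
  unfolding computes_def by (auto simp: length_Suc_conv intro: eval_Succ)

lemma eval_Proj_nth: "i < length xs \<Longrightarrow> y = xs ! i \<Longrightarrow> eval_recf (Proj i) xs y"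
  by (simp add: eval_Proj)

lemma computes_Proj [computesI]: "i < n \<Longrightarrow> computes n (Proj i) (\<lambda>xs. xs ! i)"
  unfolding computes_def by (auto intro: eval_Proj)

lemma computes_Comp:
  assumes "computes (length Gs) F H" and "list_all2 (computes n) Gs hs"
    and "\<And>xs. length xs = n \<Longrightarrow> h xs = H (map (\<lambda>g. g xs) hs)"
  shows "computes n (Comp F Gs) h"
  unfolding computes_def
proof (intro allI impI)
  fix xs :: "nat list" assume "length xs = n"
  then have "list_all2 (\<lambda>G y. eval_recf G xs y) Gs (map (\<lambda>g. g xs) hs)"
    using assms(2) by (auto simp: list_all2_conv_all_nth intro: computesD)
  moreover have "eval_recf F (map (\<lambda>g. g xs) hs) (h xs)"
    using computesD[OF assms(1), of "map (\<lambda>g. g xs) hs"] assms(3) \<open>length xs = n\<close>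
      list_all2_lengthD[OF assms(2)] by simp
  ultimately show "eval_recf (Comp F Gs) xs (h xs)"
    by (rule eval_Comp)
qed

lemma computes_Comp1 [computesI]:
  "computes 1 F H \<Longrightarrow> computes n G1 h1 \<Longrightarrow> (\<And>xs. length xs = n \<Longrightarrow> h xs = H [h1 xs])
    \<Longrightarrow> computes n (Comp F [G1]) h"
  by (rule computes_Comp) auto

lemma computes_Comp2 [computesI]:
  "computes 2 F H \<Longrightarrow> computes n G1 h1 \<Longrightarrow> computes n G2 h2
    \<Longrightarrow> (\<And>xs. length xs = n \<Longrightarrow> h xs = H [h1 xs, h2 xs]) \<Longrightarrow> computes n (Comp F [G1, G2]) h"
  by (rule computes_Comp) (auto simp: numeral_2_eq_2)

lemma computes_Comp3 [computesI]:
  "computes 3 F H \<Longrightarrow> computes n G1 h1 \<Longrightarrow> computes n G2 h2 \<Longrightarrow> computes n G3 h3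
    \<Longrightarrow> (\<And>xs. length xs = n \<Longrightarrow> h xs = H [h1 xs, h2 xs, h3 xs])
    \<Longrightarrow> computes n (Comp F [G1, G2, G3]) h"
  by (rule computes_Comp) (auto simp: numeral_3_eq_3)

lemma eval_Pr_upto:
  assumes "eval_recf F xs (r 0)"
    and "\<And>m. m < N \<Longrightarrow> eval_recf G (r m # m # xs) (r (Suc m))"
  shows "m \<le> N \<Longrightarrow> eval_recf (Pr F G) (m # xs) (r m)"
proof (induction m)
  case 0
  show ?case by (rule eval_Pr0[OF assms(1)])
next
  case (Suc m)
  then show ?case using assms(2) by (auto intro: eval_PrS)
qed

lemma computes_Pr:
  assumes "computes n F f" and "computes (Suc (Suc n)) G g"
    and "\<And>xs. length xs = n \<Longrightarrow> h (0 # xs) = f xs"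
    and "\<And>m xs. length xs = n \<Longrightarrow> h (Suc m # xs) = g (h (m # xs) # m # xs)"
  shows "computes (Suc n) (Pr F G) h"
  unfolding computes_def
proof (intro allI impI)
  fix xs :: "nat list" assume "length xs = Suc n"
  then obtain m ys where xs: "xs = m # ys" and "length ys = n"
    by (cases xs) auto
  have "eval_recf (Pr F G) (m # ys) (h (m # ys))"
    by (rule eval_Pr_upto[where r = "\<lambda>m. h (m # ys)" and N = m])
      (use assms \<open>length ys = n\<close> in \<open>auto intro: computesD\<close>)
  then show "eval_recf (Pr F G) xs (h xs)" by (simp add: xs)
qed

lemma computes_Mn:
  assumes "computes (Suc n) F g"
    and "\<And>xs. length xs = n \<Longrightarrow> g (h xs # xs) = 0"
    and "\<And>xs t. length xs = n \<Longrightarrow> t < h xs \<Longrightarrow> g (t # xs) \<noteq> 0"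
  shows "computes n (Mn F) h"
  unfolding computes_def
proof (intro allI impI)
  fix xs :: "nat list" assume "length xs = n"
  then have "eval_recf F (t # xs) (g (t # xs))" for t
    using assms(1) by (auto intro: computesD)
  then show "eval_recf (Mn F) xs (h xs)"
    using assms(2,3) \<open>length xs = n\<close> by (metis eval_Mn)
qed

fun rf_const :: "nat \<Rightarrow> recf" where
  "rf_const 0 = Zero"
| "rf_const (Suc c) = Comp Succ [rf_const c]"

lemma eval_rf_const: "eval_recf (rf_const c) xs c"
proof (induction c)
  case 0
  show ?case by (simp add: eval_Zero)
next
  case (Suc c)
  then show ?case by (auto intro!: eval_Comp eval_Succ)
qed

lemma computes_rf_const [computesI]: "computes n (rf_const c) (\<lambda>_. c)"
  unfolding computes_def by (simp add: eval_rf_const)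

definition "rf_add = Pr (Proj 0) (Comp Succ [Proj 0])"

lemma computes_rf_add [computesI]: "computes 2 rf_add (\<lambda>xs. xs ! 0 + xs ! 1)"
  unfolding rf_add_def numeral_2_eq_2
  by (rule computes_Pr) (rule computesI | simp)+

definition "rf_mult = Pr Zero (Comp rf_add [Proj 0, Proj 2])"

lemma computes_rf_mult [computesI]: "computes 2 rf_mult (\<lambda>xs. xs ! 0 * xs ! 1)"
  unfolding rf_mult_def numeral_2_eq_2
  by (rule computes_Pr) (rule computesI | simp)+

definition "rf_pred = Pr Zero (Proj 1)"

lemma computes_rf_pred [computesI]: "computes 1 rf_pred (\<lambda>xs. xs ! 0 - 1)"
  unfolding rf_pred_def One_nat_def
  by (rule computes_Pr) (rule computesI | simp)+

definition "rf_sub = Comp (Pr (Proj 0) (Comp rf_pred [Proj 0])) [Proj 1, Proj 0]"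

lemma computes_rf_sub [computesI]: "computes 2 rf_sub (\<lambda>xs. xs ! 0 - xs ! 1)"
proof -
  have swapped: "computes 2 (Pr (Proj 0) (Comp rf_pred [Proj 0])) (\<lambda>xs. xs ! 1 - xs ! 0)"
    unfolding numeral_2_eq_2 by (rule computes_Pr) (rule computesI | simp)+
  show ?thesis
    unfolding rf_sub_def by (rule computes_Comp2[OF swapped]) (rule computesI | simp)+
qed

definition "rf_ge = Comp rf_sub [rf_const 1, Comp rf_sub [Proj 1, Proj 0]]"

lemma computes_rf_ge [computesI]: "computes 2 rf_ge (\<lambda>xs. if xs ! 0 < xs ! 1 then 0 else 1)"
  unfolding rf_ge_def by (rule computesI | simp)+

definition "rf_eq = Comp rf_sub [rf_const 1, Comp rf_add [rf_sub, Comp rf_sub [Proj 1, Proj 0]]]"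

lemma computes_rf_eq [computesI]: "computes 2 rf_eq (\<lambda>xs. if xs ! 0 = xs ! 1 then 1 else 0)"
  unfolding rf_eq_def by (rule computesI | simp)+

definition "rf_if_eq a b =
  Comp rf_add [Comp rf_mult [rf_eq, rf_const a], Comp rf_mult [Comp rf_sub [rf_const 1, rf_eq], rf_const b]]"

lemma computes_rf_if_eq [computesI]:
  "computes 2 (rf_if_eq a b) (\<lambda>xs. if xs ! 0 = xs ! 1 then a else b)"
  unfolding rf_if_eq_def by (rule computesI | simp)+

definition "rf_triangle = Pr Zero (Comp rf_add [Proj 0, Comp Succ [Proj 1]])"

lemma computes_rf_triangle [computesI]: "computes 1 rf_triangle (\<lambda>xs. triangle (xs ! 0))"
  unfolding rf_triangle_def One_nat_def
  by (rule computes_Pr) (rule computesI | simp)+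

definition "rf_prod_encode = Comp rf_add [Comp rf_triangle [rf_add], Proj 0]"

lemma computes_rf_prod_encode [computesI]:
  "computes 2 rf_prod_encode (\<lambda>xs. prod_encode (xs ! 0, xs ! 1))"
  unfolding rf_prod_encode_def by (rule computesI | simp add: prod_encode_def)+

definition "rf_list3 = Comp Succ [Comp rf_prod_encode [Proj 0,
  Comp Succ [Comp rf_prod_encode [Proj 1, Comp Succ [Comp rf_prod_encode [Proj 2, Zero]]]]]]"

lemma computes_rf_list3 [computesI]:
  "computes 3 rf_list3 (\<lambda>xs. list_encode [xs ! 0, xs ! 1, xs ! 2])"
  unfolding rf_list3_def by (rule computesI | simp)+

text \<open>The first component of \<open>prod_decode z\<close> is \<open>z - triangle t\<close> for the largest \<open>t\<close> with
  \<open>triangle t \<le> z\<close>, and that \<open>t\<close> is found by unbounded search.\<close>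

definition triangle_root :: "nat \<Rightarrow> nat" where
  "triangle_root z = (LEAST t. z < triangle (Suc t))"

lemma less_triangle_Suc_self: "z < triangle (Suc z)"
  by (induction z) auto

lemma less_triangle_Suc_triangle_root: "z < triangle (Suc (triangle_root z))"
  unfolding triangle_root_def by (rule LeastI[of _ z]) (rule less_triangle_Suc_self)

lemma triangle_Suc_le_if_less_triangle_root: "t < triangle_root z \<Longrightarrow> triangle (Suc t) \<le> z"
  unfolding triangle_root_def by (metis not_less_Least not_less)

lemma triangle_triangle_root_le: "triangle (triangle_root z) \<le> z"
  using triangle_Suc_le_if_less_triangle_root[of _ z] by (cases "triangle_root z") auto

lemma fst_prod_decode_triangle_root: "fst (prod_decode z) = z - triangle (triangle_root z)"
proof -
  define t where "t = triangle_root z"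
  define m where "m = z - triangle t"
  have "triangle t \<le> z" and "z < triangle t + Suc t"
    using triangle_triangle_root_le[of z] less_triangle_Suc_triangle_root[of z]
    by (simp_all add: t_def)
  then have z: "z = triangle t + m" and "m \<le> t"
    by (simp_all add: m_def)
  have "prod_decode (triangle t + m) = (m, t - m)"
    using \<open>m \<le> t\<close> by (simp add: prod_decode_triangle_add prod_decode_aux.simps)
  then have "fst (prod_decode z) = m"
    by (simp add: z)
  then show ?thesis
    unfolding m_def t_def .
qed

definition "rf_triangle_root = Mn (Comp rf_ge [Proj 1, Comp rf_triangle [Comp Succ [Proj 0]]])"

lemma computes_rf_triangle_root [computesI]:
  "computes 1 rf_triangle_root (\<lambda>xs. triangle_root (xs ! 0))"
  unfolding rf_triangle_root_def
proof (rule computes_Mn[where g = "\<lambda>xs. if xs ! 1 < triangle (Suc (xs ! 0)) then 0 else 1"])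
  show "computes (Suc 1) (Comp rf_ge [Proj 1, Comp rf_triangle [Comp Succ [Proj 0]]])
      (\<lambda>xs. if xs ! 1 < triangle (Suc (xs ! 0)) then 0 else 1)"
    by (rule computesI | simp)+
qed (use less_triangle_Suc_triangle_root in \<open>auto dest: triangle_Suc_le_if_less_triangle_root\<close>)

definition code_hd :: "nat \<Rightarrow> nat" where
  "code_hd x = fst (prod_decode (x - 1))"

definition "rf_code_hd = Comp rf_sub [rf_pred, Comp rf_triangle [Comp rf_triangle_root [rf_pred]]]"

lemma computes_rf_code_hd [computesI]: "computes 1 rf_code_hd (\<lambda>xs. code_hd (xs ! 0))"
  unfolding rf_code_hd_def by (rule computesI | simp add: code_hd_def fst_prod_decode_triangle_root)+

definition unit_code :: "nat \<Rightarrow> nat \<Rightarrow> nat \<Rightarrow> nat \<Rightarrow> nat" where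
  "unit_code a b d i = list_encode (map (\<lambda>l. if l = i then a else b) [0..<d])"

text \<open>Built back to front, since \<open>list_encode\<close> adds elements at the head.\<close>

fun unit_suffix_code :: "nat \<Rightarrow> nat \<Rightarrow> nat \<Rightarrow> nat \<Rightarrow> nat \<Rightarrow> nat" where
  "unit_suffix_code a b 0 i d = 0"
| "unit_suffix_code a b (Suc m) i d =
    Suc (prod_encode (if d - Suc m = i then a else b, unit_suffix_code a b m i d))"

lemma unit_suffix_code_eq:
  "m \<le> d \<Longrightarrow> unit_suffix_code a b m i d = list_encode (map (\<lambda>l. if l = i then a else b) [d - m..<d])"
proof (induction m)
  case (Suc m)
  then have "[d - Suc m..<d] = (d - Suc m) # [d - m..<d]"
    by (simp add: upt_conv_Cons Suc_diff_Suc)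
  then show ?case using Suc by simp
qed simp

definition "rf_unit_suffix a b = Pr Zero (Comp Succ [Comp rf_prod_encode
  [Comp (rf_if_eq a b) [Comp rf_sub [Proj 3, Comp Succ [Proj 1]], Proj 2], Proj 0]])"

definition "rf_unit_code a b = Comp (rf_unit_suffix a b) [Proj 0, Proj 1, Proj 0]"

lemma computes_rf_unit_code [computesI]:
  "computes 2 (rf_unit_code a b) (\<lambda>xs. unit_code a b (xs ! 0) (xs ! 1))"
proof -
  have suffix: "computes 3 (rf_unit_suffix a b) (\<lambda>xs. unit_suffix_code a b (xs ! 0) (xs ! 1) (xs ! 2))"
    unfolding rf_unit_suffix_def numeral_3_eq_3 by (rule computes_Pr) (rule computesI | simp)+
  show ?thesis
    unfolding rf_unit_code_def
    by (rule computes_Comp3[OF suffix]) (rule computesI | simp add: unit_code_def unit_suffix_code_eq)+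
qed

definition code_dim :: "nat \<Rightarrow> nat" where
  "code_dim x = code_hd (code_hd x)"

definition "rf_code_dim = Comp rf_code_hd [rf_code_hd]"

lemma computes_rf_code_dim [computesI]: "computes 1 rf_code_dim (\<lambda>xs. code_dim (xs ! 0))"
  unfolding rf_code_dim_def by (rule computesI | simp add: code_dim_def)+

text \<open>Here \<open>x\<close> is meant to be the code of \<open>F\<^sub>0, \<dots>, F\<^sub>k\<^sub>-\<^sub>1\<close>, with \<open>code_dim x\<close> its dimension;
  the result is the code of the representation \<open>(e\<^sub>i\<^sup>T, F\<^sub>0, \<dots>, F\<^sub>k\<^sub>-\<^sub>1, e\<^sub>j)\<close> of the
  \<open>(i, j)\<close> entry, with \<open>a\<close> and \<open>b\<close> standing for the codes of \<open>1\<close> and \<open>0\<close>.\<close>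

definition query_code :: "nat \<Rightarrow> nat \<Rightarrow> nat \<Rightarrow> nat \<Rightarrow> nat \<Rightarrow> nat" where
  "query_code a b x i j = list_encode [list_encode [1, code_dim x, unit_code a b (code_dim x) i], x,
      list_encode [code_dim x, 1, unit_code a b (code_dim x) j]]"

definition "rf_query a b = Comp rf_list3
  [Comp rf_list3 [rf_const 1, Comp rf_code_dim [Proj 0], Comp (rf_unit_code a b) [Comp rf_code_dim [Proj 0], Proj 1]],
   Proj 0,
   Comp rf_list3 [Comp rf_code_dim [Proj 0], rf_const 1, Comp (rf_unit_code a b) [Comp rf_code_dim [Proj 0], Proj 2]]]"

lemma computes_rf_query [computesI]:
  "computes 3 (rf_query a b) (\<lambda>xs. query_code a b (xs ! 0) (xs ! 1) (xs ! 2))"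
  unfolding rf_query_def by (rule computesI | simp add: query_code_def)+

definition rf_prod :: "nat \<Rightarrow> recf \<Rightarrow> recf" where
  "rf_prod a G = Pr (rf_const 1) (Comp rf_mult [Proj 0, Comp G (map Proj [1..<a + 2])])"

lemma eval_rf_prod:
  assumes "length xs = a" and "\<And>m. m < n \<Longrightarrow> eval_recf G (m # xs) (g m)"
  shows "eval_recf (rf_prod a G) (n # xs) (\<Prod>m<n. g m)"
  unfolding rf_prod_def
proof (rule eval_Pr_upto[where r = "\<lambda>n. \<Prod>m<n. g m" and N = n])
  show "eval_recf (rf_const 1) xs (\<Prod>m<0. g m)"
    using eval_rf_const[of 1 xs] by simp
  fix m assume "m < n"
  let ?ys = "(\<Prod>l<m. g l) # m # xs"
  have "list_all2 (\<lambda>P y. eval_recf P ?ys y) (map Proj [1..<a + 2]) (m # xs)"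
  proof (rule list_all2_all_nthI)
    show "length (map Proj [1..<a + 2]) = length (m # xs)"
      using assms(1) by simp
    fix l assume l: "l < length (map Proj [1..<a + 2])"
    then have "eval_recf (Proj (Suc l)) ?ys (?ys ! Suc l)"
      using assms(1) by (intro eval_Proj) (simp del: upt_Suc)
    then show "eval_recf (map Proj [1..<a + 2] ! l) ?ys ((m # xs) ! l)"
      using l by (simp del: upt_Suc)
  qed
  then have "eval_recf (Comp G (map Proj [1..<a + 2])) ?ys (g m)"
    using assms(2)[OF \<open>m < n\<close>] by (rule eval_Comp)
  then show "eval_recf (Comp rf_mult [Proj 0, Comp G (map Proj [1..<a + 2])]) ?ys (\<Prod>l<Suc m. g l)"
    by (auto simp del: upt_Suc intro!: eval_Comp[where ys = "[\<Prod>l<m. g l, g m]"]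
        computesD[OF computes_rf_mult] eval_Proj_nth)
qed simp

definition rf_double_prod :: "recf \<Rightarrow> recf \<Rightarrow> recf \<Rightarrow> recf" where
  "rf_double_prod D Q G = Comp (rf_prod 1 (Comp (rf_prod 2 (Comp G [Comp Q [Proj 2, Proj 1, Proj 0]]))
     [Comp D [Proj 1], Proj 0, Proj 1])) [D, Proj 0]"

lemma eval_rf_double_prod:
  assumes D: "computes 1 D (\<lambda>xs. bound (xs ! 0))"
    and Q: "computes 3 Q (\<lambda>xs. query (xs ! 0) (xs ! 1) (xs ! 2))"
    and G: "\<And>i j. i < bound x \<Longrightarrow> j < bound x \<Longrightarrow> eval_recf G [query x i j] (g i j)"
  shows "eval_recf (rf_double_prod D Q G) [x] (\<Prod>i<bound x. \<Prod>j<bound x. g i j)"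
proof -
  let ?row = "rf_prod 2 (Comp G [Comp Q [Proj 2, Proj 1, Proj 0]])"
  have Q': "computes 3 (Comp Q [Proj 2, Proj 1, Proj 0]) (\<lambda>xs. query (xs ! 2) (xs ! 1) (xs ! 0))"
    by (rule computesI Q | simp)+
  have D': "computes 2 (Comp D [Proj 1]) (\<lambda>xs. bound (xs ! 1))"
    by (rule computesI D | simp)+
  have row: "eval_recf ?row [bound x, i, x] (\<Prod>j<bound x. g i j)" if "i < bound x" for i
  proof (rule eval_rf_prod)
    fix j assume "j < bound x"
    have "list_all2 (\<lambda>P y. eval_recf P [j, i, x] y) [Comp Q [Proj 2, Proj 1, Proj 0]] [query x i j]"
      using computesD[OF Q', of "[j, i, x]"] by simp
    then show "eval_recf (Comp G [Comp Q [Proj 2, Proj 1, Proj 0]]) [j, i, x] (g i j)"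
      using G[OF that \<open>j < bound x\<close>] by (rule eval_Comp)
  qed simp
  have "eval_recf (rf_prod 1 (Comp ?row [Comp D [Proj 1], Proj 0, Proj 1])) [bound x, x]
      (\<Prod>i<bound x. \<Prod>j<bound x. g i j)"
  proof (rule eval_rf_prod)
    fix i assume "i < bound x"
    have "list_all2 (\<lambda>P y. eval_recf P [i, x] y) [Comp D [Proj 1], Proj 0, Proj 1] [bound x, i, x]"
      using computesD[OF D', of "[i, x]"] by (auto intro: eval_Proj_nth)
    then show "eval_recf (Comp ?row [Comp D [Proj 1], Proj 0, Proj 1]) [i, x] (\<Prod>j<bound x. g i j)"
      using row[OF \<open>i < bound x\<close>] by (rule eval_Comp)
  qed simp
  moreover have "list_all2 (\<lambda>P y. eval_recf P [x] y) [D, Proj 0] [bound x, x]"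
    using computesD[OF D, of "[x]"] by (auto intro: eval_Proj_nth)
  ultimately show ?thesis
    unfolding rf_double_prod_def by (rule eval_Comp[rotated])
qed

definition rf_not :: "recf \<Rightarrow> recf" where
  "rf_not G = Comp rf_sub [rf_const 1, G]"

lemma eval_rf_not:
  assumes "eval_recf G xs (if b then 1 else 0)"
  shows "eval_recf (rf_not G) xs (if \<not> b then 1 else 0)"
proof -
  have "list_all2 (\<lambda>P y. eval_recf P xs y) [rf_const 1, G] [1, if b then 1 else 0]"
    using eval_rf_const[of 1 xs] assms by simp
  then show ?thesis
    unfolding rf_not_def by (rule eval_Comp) (auto intro: computesD[OF computes_rf_sub])
qed

lemma recursively_solvable_Not:
  "recursively_solvable code valid Q \<Longrightarrow> recursively_solvable code valid (\<lambda>x. \<not> Q x)"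
  unfolding recursively_solvable_def by (blast intro: eval_rf_not)

lemma prod_indicator_nat:
  "finite A \<Longrightarrow> (\<Prod>a\<in>A. if Q a then 1 else 0 :: nat) = (if \<forall>a\<in>A. Q a then 1 else 0)"
  by (induction A rule: finite_induct) auto

lemma recursively_solvable_all_pairs:
  assumes D: "computes 1 D (\<lambda>xs. bound_code (xs ! 0))"
    and Q: "computes 3 Q (\<lambda>xs. query (xs ! 0) (xs ! 1) (xs ! 2))"
    and bound: "\<And>x. valid x \<Longrightarrow> bound_code (code x) = dim_of x"
    and G: "\<And>x i j. valid x \<Longrightarrow> i < dim_of x \<Longrightarrow> j < dim_of x
      \<Longrightarrow> eval_recf G [query (code x) i j] (if R x i j then 1 else 0)"
  shows "recursively_solvable code valid (\<lambda>x. \<forall>i<dim_of x. \<forall>j<dim_of x. R x i j)"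
  unfolding recursively_solvable_def
proof (intro exI allI impI)
  fix x assume "valid x"
  then have "eval_recf (rf_double_prod D Q G) [code x]
      (\<Prod>i<dim_of x. \<Prod>j<dim_of x. if R x i j then 1 else 0)"
    using eval_rf_double_prod[OF D Q, of "code x" G] G bound by simp
  then show "eval_recf (rf_double_prod D Q G) [code x]
      (if \<forall>i<dim_of x. \<forall>j<dim_of x. R x i j then 1 else 0)"
    by (simp add: prod_indicator_nat Ball_def)
qed

lemma recursively_solvable_some_pair:
  assumes D: "computes 1 D (\<lambda>xs. bound_code (xs ! 0))"
    and Q: "computes 3 Q (\<lambda>xs. query (xs ! 0) (xs ! 1) (xs ! 2))"
    and bound: "\<And>x. valid x \<Longrightarrow> bound_code (code x) = dim_of x"
    and G: "\<And>x i j. valid x \<Longrightarrow> i < dim_of x \<Longrightarrow> j < dim_of x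
      \<Longrightarrow> eval_recf G [query (code x) i j] (if R x i j then 1 else 0)"
  shows "recursively_solvable code valid (\<lambda>x. \<exists>i<dim_of x. \<exists>j<dim_of x. R x i j)"
proof -
  have not_G: "eval_recf (rf_not G) [query (code x) i j] (if \<not> R x i j then 1 else 0)"
    if "valid x" "i < dim_of x" "j < dim_of x" for x i j
    using G[OF that] by (rule eval_rf_not)
  have "recursively_solvable code valid (\<lambda>x. \<forall>i<dim_of x. \<forall>j<dim_of x. \<not> R x i j)"
    using recursively_solvable_all_pairs[where R = "\<lambda>x i j. \<not> R x i j", OF D Q bound not_G] .
  then show ?thesis
    by (auto dest: recursively_solvable_Not)
qed

declare base_digits.simps [simp del]

lemma set_base_digits_less: "d \<in> set (base_digits k n) \<Longrightarrow> d < k"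
proof (induction k n rule: base_digits.induct)
  case (1 k n)
  have "base_digits k n = (if n = 0 \<or> k < 2 then [] else n mod k # base_digits k (n div k))"
    by (rule base_digits.simps)
  with 1 show ?case by (auto split: if_splits)
qed

lemma mat_prod_list_carrier:
  "(\<And>M. M \<in> set Ms \<Longrightarrow> M \<in> carrier_mat d d) \<Longrightarrow> mat_prod_list d Ms \<in> carrier_mat d d"
  unfolding mat_prod_list_def by (induction Ms) (auto intro!: mult_carrier_mat)

lemma unit_row_mult_unit_col_index:
  fixes A :: "'a::semiring_1 mat"
  assumes "A \<in> carrier_mat d d" and "i < d" and "j < d"
  shows "(mat_of_row (unit_vec d i) * A * mat_of_cols d [unit_vec d j]) $$ (0, 0) = A $$ (i, j)"
proof -
  have "row (mat_of_row (unit_vec d i) * A) 0 = row A i"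
    using assms by (intro eq_vecI) auto
  moreover have "col (mat_of_cols d [unit_vec d j]) 0 = unit_vec d j"
    by (intro eq_vecI) (auto simp: mat_of_cols_def)
  ultimately show ?thesis
    using assms by simp
qed

definition entry_linrep :: "'a::ring_1 mat list \<Rightarrow> nat \<Rightarrow> nat \<Rightarrow> 'a mat \<times> 'a mat list \<times> 'a mat" where
  "entry_linrep Fs i j = (let d = matrep_dim Fs in
     (mat_of_row (unit_vec d i), Fs, mat_of_cols d [unit_vec d j]))"

lemma valid_linrep_entry_linrep: "valid_matrep k Fs \<Longrightarrow> valid_linrep k (entry_linrep Fs i j)"
  by (auto simp: valid_matrep_def valid_linrep_def entry_linrep_def matrep_dim_def Let_def)

lemma linrep_seq_entry_linrep:
  assumes "valid_matrep k Fs" and "i < matrep_dim Fs" and "j < matrep_dim Fs"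
  shows "linrep_seq k (entry_linrep Fs i j) = (\<lambda>n. matrep_seq k Fs n $$ (i, j))"
proof
  fix n
  have "Fs ! l \<in> carrier_mat (matrep_dim Fs) (matrep_dim Fs)" if "l \<in> set (base_digits k n)" for l
    using assms(1) set_base_digits_less[OF that] by (auto simp: valid_matrep_def matrep_dim_def)
  then have "matrep_seq k Fs n \<in> carrier_mat (matrep_dim Fs) (matrep_dim Fs)"
    unfolding matrep_seq_def by (auto intro!: mat_prod_list_carrier)
  from unit_row_mult_unit_col_index[OF this assms(2,3)]
  show "linrep_seq k (entry_linrep Fs i j) n = matrep_seq k Fs n $$ (i, j)"
    by (simp add: linrep_seq_def entry_linrep_def matrep_seq_def Let_def)
qed

lemma code_dim_matlist_code: "Fs \<noteq> [] \<Longrightarrow> code_dim (matlist_code enc Fs) = matrep_dim Fs"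
  by (cases Fs) (simp_all add: code_dim_def code_hd_def matlist_code_def mat_code_def matrep_dim_def)

lemma mat_code_unit_row:
  "mat_code enc (mat_of_row (unit_vec d i)) = list_encode [1, d, unit_code (enc 1) (enc 0) d i]"
  unfolding mat_code_def unit_code_def
  by (auto simp: unit_vec_def intro!: arg_cong[where f = list_encode] map_cong)

lemma mat_code_unit_col:
  "mat_code enc (mat_of_cols d [unit_vec d j]) = list_encode [d, 1, unit_code (enc 1) (enc 0) d j]"
  unfolding mat_code_def unit_code_def
  by (auto simp: mat_of_cols_def unit_vec_def intro!: arg_cong[where f = list_encode] map_cong)

lemma linrep_code_entry_linrep:
  "Fs \<noteq> [] \<Longrightarrow>
    linrep_code enc (entry_linrep Fs i j) = query_code (enc 1) (enc 0) (matlist_code enc Fs) i j"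
  by (simp add: linrep_code_def entry_linrep_def Let_def query_code_def code_dim_matlist_code
      mat_code_unit_row mat_code_unit_col matlist_code_def[symmetric])

theorem lemma3p7:
  fixes k :: nat and P :: "(nat \<Rightarrow> 'a::ring_1) \<Rightarrow> bool" and enc :: "'a \<Rightarrow> nat"
  assumes "k \<ge> 2"
    and "inj enc"
    and "recursively_solvable (linrep_code enc) (valid_linrep k) (\<lambda>x. P (linrep_seq k x))"
  shows "recursively_solvable (matlist_code enc) (valid_matrep k)
           (\<lambda>Fs. P_all_entries P (matrep_dim Fs) (matrep_seq k Fs))
       \<and> recursively_solvable (matlist_code enc) (valid_matrep k)
           (\<lambda>Fs. P_some_entry P (matrep_dim Fs) (matrep_seq k Fs))"
proof -
  obtain f where f: "\<And>y. valid_linrep k y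
      \<Longrightarrow> eval_recf f [linrep_code enc y] (if P (linrep_seq k y) then 1 else 0)"
    using assms(3) unfolding recursively_solvable_def by blast
  have nonempty: "Fs \<noteq> []" if "valid_matrep k Fs" for Fs :: "'a mat list"
    using that assms(1) by (auto simp: valid_matrep_def)
  have dim: "code_dim (matlist_code enc Fs) = matrep_dim Fs" if "valid_matrep k Fs" for Fs
    using nonempty[OF that] by (rule code_dim_matlist_code)
  have entry: "eval_recf f [query_code (enc 1) (enc 0) (matlist_code enc Fs) i j]
      (if P (\<lambda>n. matrep_seq k Fs n $$ (i, j)) then 1 else 0)"
    if "valid_matrep k Fs" "i < matrep_dim Fs" "j < matrep_dim Fs" for Fs i j
    using f[OF valid_linrep_entry_linrep[OF that(1)], of i j] nonempty[OF that(1)]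
    by (simp add: linrep_code_entry_linrep linrep_seq_entry_linrep[OF that])
  note decide = computes_rf_code_dim computes_rf_query[of "enc 1" "enc 0"] dim entry
  show ?thesis
    unfolding P_all_entries_def P_some_entry_def
    using recursively_solvable_all_pairs[OF decide] recursively_solvable_some_pair[OF decide] ..
qed

end
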